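(* Let $F$ be a set of graphs containing $N_0$ and $N_1$ and closed under arbitrary $f$-unions. Setting $F(H)=\mathbb{Z}_2^{*V(H)}$ for all $H\in F$ (and $F(H)=\emptyset$ otherwise) turns $F$ into a graph fibration, which corresponds to the skew graph category $\mathscr{C}$ with $\mathscr{C}(k,l)=\{(H,\mathbf{a},\mathbf{b})\mid H\in F,\ \mathbf{a}\in V(H)^k,\ \mathbf{b}\in V(H)^l\}$. Let $G$ be a graph and $K$ the greatest subgraph of $G$ contained in $F$ (a subgraph $K\subset G$ with $K\in F$ such that every subgraph $H\subset G$ with $H\in F$ satisfies $H\subset K$), and identify $V(K)=V(G)=\{1,\dots,n\}$ via the inclusion. Then the quantum group corresponding to the representation category $\mathscr{C}^G$ is the group $\mathrm{Aut}\,K\subset S_n$.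
   Context: Graphs are finite, undirected, without multiple edges, loops allowed, up to isomorphism; $N_k$ is the edgeless graph on $k$ vertices; graph homomorphisms map edges (including loops) to edges. $\mathbb{Z}_2^{*V}$ is the group generated by the set $V$ subject to $v^2=e$; $g_{\mathbf{a}}$ denotes the product of the entries of a tuple $\mathbf{a}$. A vertex overlap of graphs $K,H$ is a subset $f\subset V(K)\times V(H)$ in which each vertex occurs at most once; $K\cup_fH$ is the quotient of $K\sqcup H$ identifying $v$ with $w$ for $(v,w)\in f$ (edges between quotient vertices iff between some representatives), with induced maps $f_K,f_H$. Graph fibration: a set of pairs $(K,a)$, $a\in\mathbb{Z}_2^{*V(K)}$, up to isomorphism, containing $(N_0,e),(N_1,e)$, such that each $F(K)=\{a\mid(K,a)\in F\}$ is empty or a normal subgroup, invariant under $\mathrm{Aut}\,K$, and $(K,a),(H,b)\in F$ implies $(K\cup_fH,f_K(a)f_H(b))\in F$ for all vertex overlaps $f$. A bilabelled graph is $(K,\mathbf{a},\mathbf{b})$ with tuples $\mathbf{a}\in V(K)^k$, $\mathbf{b}\in V(K)^l$; a fibration $F$ corresponds to the skew graph category $\{(K,\mathbf{a},\mathbf{b})\mid(K,g_{\mathbf{a}}^{-1}g_{\mathbf{b}})\in F\}$ (a skew graph category is a set of bilabelled graphs containing $(N_0,\emptyset,\emptyset)$, $(M,(v),(v))$, $(M,\emptyset,(v,v))$ for the one-vertex graph $M$, closed under $f$-unions $(K,\mathbf{a},\mathbf{b})\cup_f(H,\mathbf{c},\mathbf{d})=(K\cup_fH,f_K(\mathbf{a})f_H(\mathbf{c}),f_K(\mathbf{b})f_H(\mathbf{d}))$,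 involution and compositions of bilabelled graphs whose matched tuples have the same pattern of equal entries). With $V(G)=\{1,\dots,n\}$, $\hat T^G_{(H,\mathbf{a},\mathbf{b})}\colon(\mathbb{C}^n)^{\otimes k}\to(\mathbb{C}^n)^{\otimes l}$ has $(\mathbf{j},\mathbf{i})$-entry $\#\{\phi\colon H\to G\text{ injective homomorphism}\mid\phi(\mathbf{a})=\mathbf{i},\phi(\mathbf{b})=\mathbf{j}\}$, and $\mathscr{C}^G(k,l)=\mathrm{span}\{\hat T^G_{\mathbf{H}}\mid\mathbf{H}\in\mathscr{C}(k,l)\}$. The quantum group corresponding to such a representation category is the unique orthogonal compact matrix quantum group $(A,u)$ with $\mathrm{Mor}(u^{\otimes k},u^{\otimes l})=\{T\mid Tu^{\otimes k}=u^{\otimes l}T\}=\mathscr{C}^G(k,l)$ for all $k,l$ (Woronowicz–Tannaka–Krein duality). A permutation group $H\subset S_n$ is viewed as the quantum group $(O(H),v)$ with $v_{ij}(\sigma)=\delta_{i\sigma(j)}$, whose intertwiners are the $T$ commuting with $A_\sigma^{\otimes}$ for all permutation matrices $A_\sigma$, $\sigma\in H$. *)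

theory Defs
  imports Complex_Main "HOL-Library.FuncSet" "HOL-Combinatorics.Permutations"
begin

text \<open>Finite undirected graphs with loops allowed, on vertices drawn from nat.\<close>
record graph =
  verts :: "nat set"
  adj :: "nat \<Rightarrow> nat \<Rightarrow> bool"

definition wf_graph :: "graph \<Rightarrow> bool" where
  "wf_graph H \<longleftrightarrow> finite (verts H) \<and>
     (\<forall>u v. adj H u v \<longrightarrow> u \<in> verts H \<and> v \<in> verts H) \<and>
     (\<forall>u v. adj H u v \<longrightarrow> adj H v u)"

definition graph_iso :: "graph \<Rightarrow> graph \<Rightarrow> bool" where
  "graph_iso H H' \<longleftrightarrow> (\<exists>p. bij_betw p (verts H) (verts H') \<and>
     (\<forall>u\<in>verts H. \<forall>v\<in>verts H. adj H u v \<longleftrightarrow> adj H' (p u) (p v)))"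

definition N0 :: graph where "N0 = \<lparr>verts = {}, adj = (\<lambda>_ _. False)\<rparr>"
definition N1 :: graph where "N1 = \<lparr>verts = {0}, adj = (\<lambda>_ _. False)\<rparr>"

definition vertex_overlap :: "graph \<Rightarrow> graph \<Rightarrow> (nat \<times> nat) set \<Rightarrow> bool" where
  "vertex_overlap K H f \<longleftrightarrow> f \<subseteq> verts K \<times> verts H \<and>
     (\<forall>(a,b)\<in>f. \<forall>(c,d)\<in>f. a = c \<longleftrightarrow> b = d)"

text \<open>X (with the induced maps i, j) is the f-union of K and H: the quotient of the
  disjoint union identifying v with w for (v,w) in f, with edges between quotient
  vertices iff there is an edge between some representatives.\<close>
definition is_f_union ::
  "graph \<Rightarrow> graph \<Rightarrow> (nat \<times> nat) set \<Rightarrow> graph \<Rightarrow> (nat \<Rightarrow> nat) \<Rightarrow> (nat \<Rightarrow> nat) \<Rightarrow> bool" where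
  "is_f_union K H f X i j \<longleftrightarrow>
     inj_on i (verts K) \<and> inj_on j (verts H) \<and>
     verts X = i ` verts K \<union> j ` verts H \<and>
     (\<forall>v\<in>verts K. \<forall>w\<in>verts H. i v = j w \<longleftrightarrow> (v, w) \<in> f) \<and>
     (\<forall>x y. adj X x y \<longleftrightarrow>
        (\<exists>u v. adj K u v \<and> i u = x \<and> i v = y) \<or> (\<exists>u v. adj H u v \<and> j u = x \<and> j v = y))"

definition subgraph :: "graph \<Rightarrow> graph \<Rightarrow> bool" where
  "subgraph H G \<longleftrightarrow> verts H \<subseteq> verts G \<and> (\<forall>u v. adj H u v \<longrightarrow> adj G u v)"

definition idx :: "nat \<Rightarrow> nat \<Rightarrow> nat list set" where
  "idx n k = {xs. length xs = k \<and> set xs \<subseteq> {1..n}}"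

definition inj_hom :: "graph \<Rightarrow> graph \<Rightarrow> (nat \<Rightarrow> nat) \<Rightarrow> bool" where
  "inj_hom H G \<phi> \<longleftrightarrow> \<phi> ` verts H \<subseteq> verts G \<and> inj_on \<phi> (verts H) \<and>
     (\<forall>u v. adj H u v \<longrightarrow> adj G (\<phi> u) (\<phi> v))"

text \<open>Linear maps (C^n)^{\<otimes>k} \<rightarrow> (C^n)^{\<otimes>l} as functions T j i (j output, i input multi-index).
  hatT G H a b has (j,i)-entry the number of injective homomorphisms \<phi>: H \<rightarrow> G with
  \<phi>(a) = i, \<phi>(b) = j.\<close>
definition hatT :: "graph \<Rightarrow> graph \<Rightarrow> nat list \<Rightarrow> nat list \<Rightarrow> nat list \<Rightarrow> nat list \<Rightarrow> complex" where
  "hatT G H a b = (\<lambda>j i. of_nat (card {\<phi> \<in> verts H \<rightarrow>\<^sub>E verts G.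
       inj_hom H G \<phi> \<and> map \<phi> a = i \<and> map \<phi> b = j}))"

definition skewcat :: "(graph \<Rightarrow> bool) \<Rightarrow> nat \<Rightarrow> nat \<Rightarrow> (graph \<times> nat list \<times> nat list) set" where
  "skewcat F k l = {(H, a, b). F H \<and> length a = k \<and> set a \<subseteq> verts H \<and>
                                    length b = l \<and> set b \<subseteq> verts H}"

definition cspan :: "(nat list \<Rightarrow> nat list \<Rightarrow> complex) set \<Rightarrow> (nat list \<Rightarrow> nat list \<Rightarrow> complex) set" where
  "cspan S = {T. \<exists>A c. finite A \<and> A \<subseteq> S \<and> T = (\<lambda>j i. \<Sum>X\<in>A. c X * X j i)}"

definition CG :: "(graph \<Rightarrow> bool) \<Rightarrow> graph \<Rightarrow> nat \<Rightarrow> nat \<Rightarrow> (nat list \<Rightarrow> nat list \<Rightarrow> complex) set" where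
  "CG F G k l = cspan {hatT G H a b | H a b. (H, a, b) \<in> skewcat F k l}"

text \<open>Entries of the tensor power A_\<sigma>^{\<otimes>k}, where (A_\<sigma>)_{ij} = \<delta>_{i \<sigma>(j)}.\<close>
definition perm_tensor :: "(nat \<Rightarrow> nat) \<Rightarrow> nat list \<Rightarrow> nat list \<Rightarrow> complex" where
  "perm_tensor \<sigma> i j = (\<Prod>r<length i. if i ! r = \<sigma> (j ! r) then 1 else 0)"

definition aut_group :: "nat \<Rightarrow> graph \<Rightarrow> (nat \<Rightarrow> nat) set" where
  "aut_group n K = {\<sigma>. \<sigma> permutes {1..n} \<and> \<sigma> ` verts K = verts K \<and>
                        (\<forall>u v. adj K u v \<longleftrightarrow> adj K (\<sigma> u) (\<sigma> v))}"

text \<open>Intertwiner space Mor(v^{\<otimes>k}, v^{\<otimes>l}) of a permutation group P \<subseteq> S_n: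
  maps T (supported on the index sets) with T A_\<sigma>^{\<otimes>k} = A_\<sigma>^{\<otimes>l} T for all \<sigma> in P.\<close>
definition perm_intertwiners ::
  "nat \<Rightarrow> (nat \<Rightarrow> nat) set \<Rightarrow> nat \<Rightarrow> nat \<Rightarrow> (nat list \<Rightarrow> nat list \<Rightarrow> complex) set" where
  "perm_intertwiners n P k l = {T.
     (\<forall>j i. \<not> (j \<in> idx n l \<and> i \<in> idx n k) \<longrightarrow> T j i = 0) \<and>
     (\<forall>\<sigma>\<in>P. \<forall>j\<in>idx n l. \<forall>i\<in>idx n k.
        (\<Sum>m\<in>idx n k. T j m * perm_tensor \<sigma> m i) = (\<Sum>m\<in>idx n l. perm_tensor \<sigma> j m * T m i))}"

end

theory Submission
  imports Defs
begin

(* Every one-vertex graph is isomorphic to N1, so the greatest subgraph K of G lying in F has all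
   vertices of G; and the image of an injective homomorphism H -> G with H in F is a subgraph of G
   isomorphic to H, hence contained in K. So C^G is spanned by the maps counting injective
   homomorphisms into K, which are invariant under relabelling by Aut K since Aut K acts on these
   homomorphisms by composition. Conversely, an injective endomorphism of the finite graph K is an
   automorphism, so the map of (K, a, b) counts the automorphisms sending (a, b) to (i, j), and
   averaging over Aut K writes every Aut K-invariant map as a combination of these. For permutation
   matrices, intertwining amounts to exactly this invariance. *)

lemma finite_idx: "finite (idx n k)"
  unfolding idx_def using finite_lists_length_eq[of "{1..n}" k] by (simp add: conj_commute)

lemma map_permutes_in_idx_iff:
  assumes "\<sigma> permutes {1..n}"
  shows "map \<sigma> xs \<in> idx n k \<longleftrightarrow> xs \<in> idx n k"
  unfolding idx_def using permutes_in_image[OF assms] by auto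

lemma map_permutes_inverses:
  assumes "\<sigma> permutes S"
  shows "map (inv \<sigma>) (map \<sigma> xs) = xs" "map \<sigma> (map (inv \<sigma>) xs) = xs"
  using permutes_inverses[OF assms] by (simp_all add: map_idI)

lemma perm_tensor_eq:
  assumes "length m = length i"
  shows "perm_tensor \<sigma> m i = (if m = map \<sigma> i then 1 else 0)"
proof (cases "m = map \<sigma> i")
  case True
  then show ?thesis unfolding perm_tensor_def by simp
next
  case False
  then obtain r where "r < length i" "m ! r \<noteq> \<sigma> (i ! r)"
    using assms by (metis length_map list_eq_iff_nth_eq nth_map)
  with False assms show ?thesis
    unfolding perm_tensor_def by (intro trans[OF prod_zero]) (auto intro!: bexI[of _ r])
qed

lemma sum_times_perm_tensor:
  assumes "\<sigma> permutes {1..n}" "i \<in> idx n k"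
  shows "(\<Sum>m\<in>idx n k. f m * perm_tensor \<sigma> m i) = f (map \<sigma> i)"
proof -
  have "(\<Sum>m\<in>idx n k. f m * perm_tensor \<sigma> m i) = (\<Sum>m\<in>idx n k. if m = map \<sigma> i then f m else 0)"
    using assms(2) by (intro sum.cong) (auto simp: perm_tensor_eq idx_def)
  also have "\<dots> = f (map \<sigma> i)"
    using assms finite_idx map_permutes_in_idx_iff by simp
  finally show ?thesis .
qed

lemma sum_perm_tensor_times:
  assumes "\<sigma> permutes {1..n}" "j \<in> idx n l"
  shows "(\<Sum>m\<in>idx n l. perm_tensor \<sigma> j m * f m) = f (map (inv \<sigma>) j)"
proof -
  have "j = map \<sigma> m \<longleftrightarrow> m = map (inv \<sigma>) j" for m
    using map_permutes_inverses[OF assms(1)] by metis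
  then have "(\<Sum>m\<in>idx n l. perm_tensor \<sigma> j m * f m) = (\<Sum>m\<in>idx n l. if m = map (inv \<sigma>) j then f m else 0)"
    using assms(2) by (intro sum.cong) (auto simp: perm_tensor_eq idx_def)
  also have "\<dots> = f (map (inv \<sigma>) j)"
    using map_permutes_in_idx_iff[OF permutes_inv[OF assms(1)]] assms(2) finite_idx by simp
  finally show ?thesis .
qed

definition perm_invariants ::
  "nat \<Rightarrow> (nat \<Rightarrow> nat) set \<Rightarrow> nat \<Rightarrow> nat \<Rightarrow> (nat list \<Rightarrow> nat list \<Rightarrow> complex) set" where
  "perm_invariants n P k l = {T.
     (\<forall>j i. \<not> (j \<in> idx n l \<and> i \<in> idx n k) \<longrightarrow> T j i = 0) \<and>
     (\<forall>\<sigma>\<in>P. \<forall>j i. T (map \<sigma> j) (map \<sigma> i) = T j i)}"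

lemma intertwines_iff_invariant:
  assumes \<sigma>: "\<sigma> permutes {1..n}"
    and supp: "\<And>j i. \<not> (j \<in> idx n l \<and> i \<in> idx n k) \<Longrightarrow> T j i = 0"
  shows "(\<forall>j\<in>idx n l. \<forall>i\<in>idx n k.
           (\<Sum>m\<in>idx n k. T j m * perm_tensor \<sigma> m i) = (\<Sum>m\<in>idx n l. perm_tensor \<sigma> j m * T m i))
       \<longleftrightarrow> (\<forall>j i. T (map \<sigma> j) (map \<sigma> i) = T j i)"
    (is "?intertwines \<longleftrightarrow> ?invariant")
proof -
  have "?intertwines \<longleftrightarrow> (\<forall>j\<in>idx n l. \<forall>i\<in>idx n k. T j (map \<sigma> i) = T (map (inv \<sigma>) j) i)"
    using sum_times_perm_tensor[OF \<sigma>] sum_perm_tensor_times[OF \<sigma>] by simp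
  also have "\<dots> \<longleftrightarrow> ?invariant"
  proof
    assume shift: "\<forall>j\<in>idx n l. \<forall>i\<in>idx n k. T j (map \<sigma> i) = T (map (inv \<sigma>) j) i"
    show ?invariant
    proof (intro allI)
      fix j i
      show "T (map \<sigma> j) (map \<sigma> i) = T j i"
      proof (cases "j \<in> idx n l \<and> i \<in> idx n k")
        case True
        then show ?thesis
          using shift map_permutes_in_idx_iff[OF \<sigma>] map_permutes_inverses[OF \<sigma>] by metis
      next
        case False
        then show ?thesis using supp map_permutes_in_idx_iff[OF \<sigma>] by metis
      qed
    qed
  next
    assume ?invariant
    then show "\<forall>j\<in>idx n l. \<forall>i\<in>idx n k. T j (map \<sigma> i) = T (map (inv \<sigma>) j) i"
      using map_permutes_inverses[OF \<sigma>] by metis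
  qed
  finally show ?thesis .
qed

lemma perm_intertwiners_eq_perm_invariants:
  assumes "\<And>\<sigma>. \<sigma> \<in> P \<Longrightarrow> \<sigma> permutes {1..n}"
  shows "perm_intertwiners n P k l = perm_invariants n P k l"
  unfolding perm_intertwiners_def perm_invariants_def
  using intertwines_iff_invariant[OF assms] by blast

lemma cspan_sum:
  assumes "finite I" "\<And>x. x \<in> I \<Longrightarrow> g x \<in> S"
  shows "(\<lambda>j i. \<Sum>x\<in>I. c x * g x j i) \<in> cspan S"
proof -
  define c' where "c' X = (\<Sum>x\<in>{x\<in>I. g x = X}. c x)" for X
  have "(\<Sum>x\<in>I. c x * g x j i) = (\<Sum>X\<in>g ` I. c' X * X j i)" for j i
  proof -
    have "(\<Sum>x\<in>I. c x * g x j i) = (\<Sum>X\<in>g ` I. \<Sum>x\<in>{x\<in>I. g x = X}. c x * g x j i)"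
      by (rule sum.image_gen[OF assms(1)])
    also have "\<dots> = (\<Sum>X\<in>g ` I. c' X * X j i)"
      unfolding c'_def sum_distrib_right by (intro sum.cong refl) auto
    finally show ?thesis .
  qed
  then show ?thesis
    unfolding cspan_def using assms by (intro CollectI exI[of _ "g ` I"] exI[of _ c']) auto
qed

lemma cspan_mono: "S \<subseteq> S' \<Longrightarrow> cspan S \<subseteq> cspan S'"
  unfolding cspan_def by blast

lemma cspan_subset_perm_invariants:
  assumes "S \<subseteq> perm_invariants n P k l"
  shows "cspan S \<subseteq> perm_invariants n P k l"
proof
  fix T assume "T \<in> cspan S"
  then obtain B c where B: "finite B" "B \<subseteq> S" and T: "T = (\<lambda>j i. \<Sum>X\<in>B. c X * X j i)"
    unfolding cspan_def by blast
  have "X \<in> perm_invariants n P k l" if "X \<in> B" for X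
    using that B(2) assms by blast
  then show "T \<in> perm_invariants n P k l"
    unfolding T perm_invariants_def by (auto intro: sum.neutral sum.cong)
qed

lemma sum_perm_invariant_card_transporters:
  assumes A: "finite A" "\<And>\<sigma>. \<sigma> \<in> A \<Longrightarrow> \<sigma> permutes {1..n}" and T: "T \<in> perm_invariants n A k l"
  shows "(\<Sum>(j0, i0)\<in>idx n l \<times> idx n k. T j0 i0 * of_nat (card {\<sigma>\<in>A. map \<sigma> i0 = i \<and> map \<sigma> j0 = j}))
    = of_nat (card A) * T j i"
proof -
  let ?P = "idx n l \<times> idx n k"
  have supp: "\<And>j i. \<not> (j \<in> idx n l \<and> i \<in> idx n k) \<Longrightarrow> T j i = 0"
    and inv: "\<And>\<sigma> j i. \<sigma> \<in> A \<Longrightarrow> T (map \<sigma> j) (map \<sigma> i) = T j i"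
    using T unfolding perm_invariants_def by blast+
  have transported: "(\<Sum>(j0, i0)\<in>?P. if map \<sigma> i0 = i \<and> map \<sigma> j0 = j then T j0 i0 else 0) = T j i"
    if "\<sigma> \<in> A" for \<sigma>
  proof -
    have \<sigma>: "\<sigma> permutes {1..n}" using A(2) that .
    have transporter: "map \<sigma> i0 = i \<and> map \<sigma> j0 = j \<longleftrightarrow> (j0, i0) = (map (inv \<sigma>) j, map (inv \<sigma>) i)" for i0 j0
      using map_permutes_inverses[OF \<sigma>] by auto
    have "(\<Sum>(j0, i0)\<in>?P. if map \<sigma> i0 = i \<and> map \<sigma> j0 = j then T j0 i0 else 0)
        = (\<Sum>p\<in>?P. if p = (map (inv \<sigma>) j, map (inv \<sigma>) i) then case_prod T p else 0)"
      unfolding transporter by (intro sum.cong refl) (auto simp: case_prod_beta prod_eq_iff)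
    also have "\<dots> = (if (map (inv \<sigma>) j, map (inv \<sigma>) i) \<in> ?P then T (map (inv \<sigma>) j) (map (inv \<sigma>) i) else 0)"
      using finite_idx by (subst sum.delta) auto
    also have "\<dots> = T j i"
      using supp inv[OF that, of "map (inv \<sigma>) j" "map (inv \<sigma>) i"] map_permutes_inverses[OF \<sigma>]
        map_permutes_in_idx_iff[OF permutes_inv[OF \<sigma>]] by auto
    finally show ?thesis .
  qed
  have "(\<Sum>(j0, i0)\<in>?P. T j0 i0 * of_nat (card {\<sigma>\<in>A. map \<sigma> i0 = i \<and> map \<sigma> j0 = j}))
      = (\<Sum>(j0, i0)\<in>?P. \<Sum>\<sigma>\<in>A. if map \<sigma> i0 = i \<and> map \<sigma> j0 = j then T j0 i0 else 0)"
    using A(1) by (intro sum.cong) (auto simp: sum.If_cases Int_def)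
  also have "\<dots> = (\<Sum>\<sigma>\<in>A. \<Sum>(j0, i0)\<in>?P. if map \<sigma> i0 = i \<and> map \<sigma> j0 = j then T j0 i0 else 0)"
    by (subst sum.swap) (simp add: case_prod_beta')
  also have "\<dots> = of_nat (card A) * T j i"
    using transported by simp
  finally show ?thesis .
qed

definition image_graph :: "(nat \<Rightarrow> nat) \<Rightarrow> graph \<Rightarrow> graph" where
  "image_graph \<phi> H = \<lparr>verts = \<phi> ` verts H,
     adj = (\<lambda>x y. \<exists>u v. adj H u v \<and> \<phi> u = x \<and> \<phi> v = y)\<rparr>"

lemma wf_image_graph: "wf_graph H \<Longrightarrow> wf_graph (image_graph \<phi> H)"
  unfolding wf_graph_def image_graph_def by auto blast

lemma graph_iso_image_graph:
  assumes wf: "wf_graph H" and inj: "inj_on \<phi> (verts H)"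
  shows "graph_iso H (image_graph \<phi> H)"
  unfolding graph_iso_def
proof (intro exI conjI ballI)
  show "bij_betw \<phi> (verts H) (verts (image_graph \<phi> H))"
    using inj unfolding image_graph_def bij_betw_def by simp
  fix u v assume uv: "u \<in> verts H" "v \<in> verts H"
  show "adj H u v \<longleftrightarrow> adj (image_graph \<phi> H) (\<phi> u) (\<phi> v)"
  proof
    assume "adj (image_graph \<phi> H) (\<phi> u) (\<phi> v)"
    then obtain u' v' where "adj H u' v'" "\<phi> u' = \<phi> u" "\<phi> v' = \<phi> v"
      unfolding image_graph_def by auto
    moreover from \<open>adj H u' v'\<close> have "u' \<in> verts H" "v' \<in> verts H"
      using wf unfolding wf_graph_def by auto
    ultimately show "adj H u v" using inj uv by (metis inj_onD)
  qed (auto simp: image_graph_def)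
qed

lemma subgraph_image_graph: "inj_hom H G \<phi> \<Longrightarrow> subgraph (image_graph \<phi> H) G"
  unfolding subgraph_def image_graph_def inj_hom_def by auto

lemma inj_hom_subgraph: "inj_hom H K \<phi> \<Longrightarrow> subgraph K G \<Longrightarrow> inj_hom H G \<phi>"
  unfolding inj_hom_def subgraph_def by auto

lemma inj_hom_into_greatest_subgraph:
  assumes F_iso: "\<And>H H'. F H \<Longrightarrow> wf_graph H' \<Longrightarrow> graph_iso H H' \<Longrightarrow> F H'"
    and K_greatest: "\<And>H. wf_graph H \<Longrightarrow> subgraph H G \<Longrightarrow> F H \<Longrightarrow> subgraph H K"
    and H: "F H" "wf_graph H" and \<phi>: "inj_hom H G \<phi>"
  shows "inj_hom H K \<phi>"
proof -
  have "F (image_graph \<phi> H)"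
    using F_iso[OF H(1) wf_image_graph[OF H(2)] graph_iso_image_graph[OF H(2)]] \<phi>
    unfolding inj_hom_def by blast
  then have "subgraph (image_graph \<phi> H) K"
    using K_greatest wf_image_graph[OF H(2)] subgraph_image_graph[OF \<phi>] by blast
  with \<phi> show ?thesis
    unfolding inj_hom_def subgraph_def image_graph_def by fastforce
qed

lemma verts_greatest_subgraph:
  assumes F_iso: "\<And>H H'. F H \<Longrightarrow> wf_graph H' \<Longrightarrow> graph_iso H H' \<Longrightarrow> F H'"
    and K_greatest: "\<And>H. wf_graph H \<Longrightarrow> subgraph H G \<Longrightarrow> F H \<Longrightarrow> subgraph H K"
    and "F N1" and "subgraph K G"
  shows "verts K = verts G"
proof
  show "verts K \<subseteq> verts G" using \<open>subgraph K G\<close> unfolding subgraph_def by blast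
  show "verts G \<subseteq> verts K"
  proof
    fix v assume "v \<in> verts G"
    then have "inj_hom N1 G (\<lambda>_. v)" unfolding inj_hom_def N1_def by simp
    moreover have "wf_graph N1" unfolding wf_graph_def N1_def by simp
    ultimately have "inj_hom N1 K (\<lambda>_. v)"
      using F_iso K_greatest \<open>F N1\<close> by (blast intro: inj_hom_into_greatest_subgraph)
    then show "v \<in> verts K" unfolding inj_hom_def N1_def by simp
  qed
qed

lemma hatT_greatest_subgraph:
  assumes F_iso: "\<And>H H'. F H \<Longrightarrow> wf_graph H' \<Longrightarrow> graph_iso H H' \<Longrightarrow> F H'"
    and K_greatest: "\<And>H. wf_graph H \<Longrightarrow> subgraph H G \<Longrightarrow> F H \<Longrightarrow> subgraph H K"
    and "subgraph K G" "verts K = verts G" "F H" "wf_graph H"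
  shows "hatT G H a b = hatT K H a b"
proof -
  have "inj_hom H K \<phi>" if "inj_hom H G \<phi>" for \<phi>
    using F_iso K_greatest \<open>F H\<close> \<open>wf_graph H\<close> that by (rule inj_hom_into_greatest_subgraph)
  then have "inj_hom H G \<phi> \<longleftrightarrow> inj_hom H K \<phi>" for \<phi>
    using inj_hom_subgraph \<open>subgraph K G\<close> by blast
  then show ?thesis unfolding hatT_def \<open>verts K = verts G\<close> by simp
qed

lemma aut_group_permutes: "\<sigma> \<in> aut_group n K \<Longrightarrow> \<sigma> permutes {1..n}"
  unfolding aut_group_def by simp

lemma finite_aut_group: "finite (aut_group n K)"
  by (rule finite_subset[OF _ finite_permutations[of "{1..n}"]]) (auto dest: aut_group_permutes)

lemma card_aut_group_pos: "card (aut_group n K) > 0"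
proof -
  have "id \<in> aut_group n K" unfolding aut_group_def by simp
  then show ?thesis using finite_aut_group card_gt_0_iff by blast
qed

lemma inv_in_aut_group:
  assumes "\<sigma> \<in> aut_group n K"
  shows "inv \<sigma> \<in> aut_group n K"
proof -
  have \<sigma>: "\<sigma> permutes {1..n}" "\<sigma> ` verts K = verts K" "\<And>u v. adj K u v \<longleftrightarrow> adj K (\<sigma> u) (\<sigma> v)"
    using assms unfolding aut_group_def by blast+
  have "inv \<sigma> ` verts K = verts K"
    by (metis \<sigma>(2) image_inv_f_f permutes_inj[OF \<sigma>(1)])
  moreover have "adj K u v \<longleftrightarrow> adj K (inv \<sigma> u) (inv \<sigma> v)" for u v
    using \<sigma>(3)[of "inv \<sigma> u" "inv \<sigma> v"] permutes_inverses[OF \<sigma>(1)] by simp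
  ultimately show ?thesis using permutes_inv[OF \<sigma>(1)] unfolding aut_group_def by simp
qed

definition inj_homs :: "graph \<Rightarrow> graph \<Rightarrow> nat list \<Rightarrow> nat list \<Rightarrow> nat list \<Rightarrow> nat list \<Rightarrow> (nat \<Rightarrow> nat) set" where
  "inj_homs H K a b j i = {\<phi> \<in> verts H \<rightarrow>\<^sub>E verts K. inj_hom H K \<phi> \<and> map \<phi> a = i \<and> map \<phi> b = j}"

lemma hatT_eq_card_inj_homs: "hatT K H a b j i = of_nat (card (inj_homs H K a b j i))"
  unfolding hatT_def inj_homs_def ..

lemma aut_compose_in_inj_homs:
  assumes wf: "wf_graph H" and \<sigma>: "\<sigma> \<in> aut_group n K" and ab: "set a \<subseteq> verts H" "set b \<subseteq> verts H"
    and \<phi>: "\<phi> \<in> inj_homs H K a b j i"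
  shows "restrict (\<sigma> \<circ> \<phi>) (verts H) \<in> inj_homs H K a b (map \<sigma> j) (map \<sigma> i)"
proof -
  have \<sigma>K: "\<sigma> ` verts K = verts K" "\<And>u v. adj K u v \<Longrightarrow> adj K (\<sigma> u) (\<sigma> v)"
    using \<sigma> unfolding aut_group_def by blast+
  have \<phi>K: "\<phi> ` verts H \<subseteq> verts K" "inj_on \<phi> (verts H)" "\<And>u v. adj H u v \<Longrightarrow> adj K (\<phi> u) (\<phi> v)"
    using \<phi> unfolding inj_homs_def inj_hom_def by auto
  have into: "(\<sigma> \<circ> \<phi>) ` verts H \<subseteq> verts K"
    using \<sigma>K(1) \<phi>K(1) by (metis image_comp image_mono)
  have "inj_on (\<sigma> \<circ> \<phi>) (verts H)"
    using \<phi>K(2) permutes_inj_on[OF aut_group_permutes[OF \<sigma>]] by (simp add: comp_inj_on)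
  moreover have "adj H u v \<Longrightarrow> u \<in> verts H \<and> v \<in> verts H" for u v
    using wf unfolding wf_graph_def by blast
  ultimately have "inj_hom H K (restrict (\<sigma> \<circ> \<phi>) (verts H))"
    using into \<sigma>K(2) \<phi>K(3) unfolding inj_hom_def by (auto simp: inj_on_restrict_iff)
  moreover have "map (restrict (\<sigma> \<circ> \<phi>) (verts H)) a = map \<sigma> i"
    "map (restrict (\<sigma> \<circ> \<phi>) (verts H)) b = map \<sigma> j"
    using \<phi> ab unfolding inj_homs_def by auto
  ultimately show ?thesis
    using into unfolding inj_homs_def by auto
qed

lemma hatT_aut_invariant:
  assumes wf: "wf_graph H" and \<sigma>: "\<sigma> \<in> aut_group n K" and ab: "set a \<subseteq> verts H" "set b \<subseteq> verts H"
  shows "hatT K H a b (map \<sigma> j) (map \<sigma> i) = hatT K H a b j i"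
proof -
  have p: "\<sigma> permutes {1..n}" using aut_group_permutes[OF \<sigma>] .
  have "bij_betw (\<lambda>\<phi>. restrict (\<sigma> \<circ> \<phi>) (verts H))
          (inj_homs H K a b j i) (inj_homs H K a b (map \<sigma> j) (map \<sigma> i))"
  proof (rule bij_betw_byWitness[where f' = "\<lambda>\<psi>. restrict (inv \<sigma> \<circ> \<psi>) (verts H)"])
    have cancel: "restrict (\<tau>' \<circ> restrict (\<tau> \<circ> \<phi>) (verts H)) (verts H) = \<phi>"
      if "\<phi> \<in> extensional (verts H)" "\<And>x. \<tau>' (\<tau> x) = x" for \<tau> \<tau>' :: "nat \<Rightarrow> nat" and \<phi>
      using that by (auto simp: fun_eq_iff extensional_def)
    show "\<forall>\<phi>\<in>inj_homs H K a b j i. restrict (inv \<sigma> \<circ> restrict (\<sigma> \<circ> \<phi>) (verts H)) (verts H) = \<phi>"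
      "\<forall>\<psi>\<in>inj_homs H K a b (map \<sigma> j) (map \<sigma> i).
         restrict (\<sigma> \<circ> restrict (inv \<sigma> \<circ> \<psi>) (verts H)) (verts H) = \<psi>"
      using permutes_inverses[OF p] unfolding inj_homs_def by (auto simp: PiE_iff intro!: cancel)
    show "(\<lambda>\<phi>. restrict (\<sigma> \<circ> \<phi>) (verts H)) ` inj_homs H K a b j i
            \<subseteq> inj_homs H K a b (map \<sigma> j) (map \<sigma> i)"
      using aut_compose_in_inj_homs[OF wf \<sigma> ab] by blast
    show "(\<lambda>\<psi>. restrict (inv \<sigma> \<circ> \<psi>) (verts H)) ` inj_homs H K a b (map \<sigma> j) (map \<sigma> i)
            \<subseteq> inj_homs H K a b j i"
      using aut_compose_in_inj_homs[OF wf inv_in_aut_group[OF \<sigma>] ab, where j = "map \<sigma> j" and i = "map \<sigma> i"]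
      unfolding map_permutes_inverses[OF p] by blast
  qed
  from bij_betw_same_card[OF this] show ?thesis unfolding hatT_eq_card_inj_homs by simp
qed

lemma inj_hom_self_extends_to_aut:
  assumes wf: "wf_graph K" and KV: "verts K = {1..n}" and \<phi>: "inj_hom K K \<phi>"
  shows "(\<lambda>x. if x \<in> {1..n} then \<phi> x else x) \<in> aut_group n K"
    (is "?\<sigma> \<in> _")
proof -
  let ?V = "{1..n}" and ?E = "{(u, v). adj K u v}"
  have inj: "inj_on \<phi> ?V" and hom: "\<And>u v. adj K u v \<Longrightarrow> adj K (\<phi> u) (\<phi> v)"
    using \<phi> KV unfolding inj_hom_def by auto
  have "\<phi> ` ?V = ?V"
    using \<phi> KV by (intro endo_inj_surj) (auto simp: inj_hom_def)
  then have "bij_betw \<phi> ?V ?V"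
    using inj by (simp add: bij_betw_def)
  then have "bij_betw ?\<sigma> ?V ?V"
    using bij_betw_cong[of ?V ?\<sigma> \<phi>] by simp
  then have perm: "?\<sigma> permutes ?V"
    by (rule bij_imp_permutes) auto
  have E: "?E \<subseteq> ?V \<times> ?V" using wf KV unfolding wf_graph_def by blast
  then have "finite ?E" by (rule finite_subset) simp
  moreover have "map_prod \<phi> \<phi> ` ?E \<subseteq> ?E" using hom by auto
  moreover have "inj_on (map_prod \<phi> \<phi>) ?E"
    using map_prod_inj_on[OF inj inj] E by (rule inj_on_subset)
  ultimately have edges_onto: "map_prod \<phi> \<phi> ` ?E = ?E"
    by (rule endo_inj_surj)
  have "adj K u v \<longleftrightarrow> adj K (?\<sigma> u) (?\<sigma> v)" for u v
  proof
    assume "adj K u v"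
    moreover from this have "u \<in> ?V" "v \<in> ?V" using E by auto
    ultimately show "adj K (?\<sigma> u) (?\<sigma> v)" using hom by simp
  next
    assume adj: "adj K (?\<sigma> u) (?\<sigma> v)"
    then have "?\<sigma> u \<in> ?V" "?\<sigma> v \<in> ?V" using E by auto
    then have uv: "u \<in> ?V" "v \<in> ?V" using permutes_in_image[OF perm] by auto
    with adj have "(\<phi> u, \<phi> v) \<in> map_prod \<phi> \<phi> ` ?E" unfolding edges_onto by simp
    then obtain u' v' where "adj K u' v'" "\<phi> u' = \<phi> u" "\<phi> v' = \<phi> v" by auto
    moreover from \<open>adj K u' v'\<close> have "u' \<in> ?V" "v' \<in> ?V" using E by auto
    ultimately show "adj K u v" using inj uv by (metis inj_onD)
  qed
  moreover have "?\<sigma> ` verts K = verts K" using permutes_image[OF perm] KV by simp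
  ultimately show ?thesis using perm unfolding aut_group_def by blast
qed

lemma hatT_self_eq_card_aut:
  assumes wf: "wf_graph K" and KV: "verts K = {1..n}" and ab: "set a \<subseteq> verts K" "set b \<subseteq> verts K"
  shows "hatT K K a b j i = of_nat (card {\<sigma> \<in> aut_group n K. map \<sigma> a = i \<and> map \<sigma> b = j})"
proof -
  let ?V = "{1..n}" and ?A = "{\<sigma> \<in> aut_group n K. map \<sigma> a = i \<and> map \<sigma> b = j}"
  have "bij_betw (\<lambda>\<sigma>. restrict \<sigma> ?V) ?A (inj_homs K K a b j i)"
  proof (rule bij_betw_byWitness[where f' = "\<lambda>\<phi> x. if x \<in> ?V then \<phi> x else x"])
    show "\<forall>\<sigma>\<in>?A. (\<lambda>x. if x \<in> ?V then restrict \<sigma> ?V x else x) = \<sigma>"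
      using aut_group_permutes permutes_not_in by fastforce
    show "\<forall>\<phi>\<in>inj_homs K K a b j i. restrict (\<lambda>x. if x \<in> ?V then \<phi> x else x) ?V = \<phi>"
      unfolding inj_homs_def KV by (auto simp: PiE_iff extensional_def)
    show "(\<lambda>\<sigma>. restrict \<sigma> ?V) ` ?A \<subseteq> inj_homs K K a b j i"
    proof (rule image_subsetI)
      fix \<sigma> assume "\<sigma> \<in> ?A"
      then have \<sigma>: "\<sigma> \<in> aut_group n K" and ab_image: "map \<sigma> a = i" "map \<sigma> b = j" by auto
      have p: "\<sigma> permutes ?V" using aut_group_permutes[OF \<sigma>] .
      have "adj K u v \<Longrightarrow> u \<in> ?V \<and> v \<in> ?V" for u v using wf KV unfolding wf_graph_def by blast
      moreover have "adj K u v \<Longrightarrow> adj K (\<sigma> u) (\<sigma> v)" for u v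
        using \<sigma> unfolding aut_group_def by blast
      ultimately have "inj_hom K K (restrict \<sigma> ?V)"
        using permutes_in_image[OF p] permutes_inj_on[OF p] KV
        unfolding inj_hom_def by (auto simp: inj_on_restrict_iff)
      moreover have "map (restrict \<sigma> ?V) xs = map \<sigma> xs" if "set xs \<subseteq> ?V" for xs
        using that by (intro map_cong) auto
      ultimately show "restrict \<sigma> ?V \<in> inj_homs K K a b j i"
        using ab ab_image permutes_in_image[OF p] KV unfolding inj_homs_def by auto
    qed
    show "(\<lambda>\<phi> x. if x \<in> ?V then \<phi> x else x) ` inj_homs K K a b j i \<subseteq> ?A"
    proof (rule image_subsetI)
      fix \<phi> assume \<phi>: "\<phi> \<in> inj_homs K K a b j i"
      have "map (\<lambda>x. if x \<in> ?V then \<phi> x else x) xs = map \<phi> xs" if "set xs \<subseteq> ?V" for xs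
        using that by (intro map_cong) auto
      then show "(\<lambda>x. if x \<in> ?V then \<phi> x else x) \<in> ?A"
        using \<phi> inj_hom_self_extends_to_aut[OF wf KV] ab KV unfolding inj_homs_def by auto
    qed
  qed
  from bij_betw_same_card[OF this] show ?thesis unfolding hatT_eq_card_inj_homs by simp
qed

lemma hatT_in_perm_invariants:
  assumes "verts K \<subseteq> {1..n}" "wf_graph H"
    and "length a = k" "length b = l" "set a \<subseteq> verts H" "set b \<subseteq> verts H"
  shows "hatT K H a b \<in> perm_invariants n (aut_group n K) k l"
proof -
  have "inj_homs H K a b j i = {}" if "\<not> (j \<in> idx n l \<and> i \<in> idx n k)" for j i
  proof (rule ccontr)
    assume "inj_homs H K a b j i \<noteq> {}"
    then obtain \<phi> where "\<phi> ` verts H \<subseteq> verts K" "map \<phi> a = i" "map \<phi> b = j"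
      unfolding inj_homs_def by blast
    moreover have "\<phi> ` set a \<subseteq> {1..n}" "\<phi> ` set b \<subseteq> {1..n}"
      using assms(1,5,6) \<open>\<phi> ` verts H \<subseteq> verts K\<close> by blast+
    ultimately have "j \<in> idx n l \<and> i \<in> idx n k" using assms(3,4) unfolding idx_def by auto
    with that show False ..
  qed
  then have "hatT K H a b j i = 0" if "\<not> (j \<in> idx n l \<and> i \<in> idx n k)" for j i
    using that unfolding hatT_eq_card_inj_homs by simp
  then show ?thesis
    unfolding perm_invariants_def using hatT_aut_invariant[OF assms(2) _ assms(5,6)] by blast
qed

lemma perm_invariants_subset_cspan_hatT_self:
  assumes wf: "wf_graph K" and KV: "verts K = {1..n}"
  shows "perm_invariants n (aut_group n K) k l
    \<subseteq> cspan {hatT K K a b | a b. length a = k \<and> length b = l \<and> set a \<subseteq> verts K \<and> set b \<subseteq> verts K}"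
proof
  fix T assume T: "T \<in> perm_invariants n (aut_group n K) k l"
  let ?A = "aut_group n K" and ?P = "idx n l \<times> idx n k"
  let ?c = "\<lambda>p. T (fst p) (snd p) / of_nat (card ?A)" and ?g = "\<lambda>p. hatT K K (snd p) (fst p)"
  have "T = (\<lambda>j i. \<Sum>p\<in>?P. ?c p * ?g p j i)"
  proof (intro ext)
    fix j i
    have "(\<Sum>(j0, i0)\<in>?P. T j0 i0 * hatT K K i0 j0 j i)
        = (\<Sum>(j0, i0)\<in>?P. T j0 i0 * of_nat (card {\<sigma>\<in>?A. map \<sigma> i0 = i \<and> map \<sigma> j0 = j}))"
      using hatT_self_eq_card_aut[OF wf KV] by (intro sum.cong refl) (auto simp: idx_def KV)
    also have "\<dots> = of_nat (card ?A) * T j i"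
      by (rule sum_perm_invariant_card_transporters[OF finite_aut_group aut_group_permutes T])
    finally have "(\<Sum>(j0, i0)\<in>?P. T j0 i0 * hatT K K i0 j0 j i) / of_nat (card ?A) = T j i"
      using card_aut_group_pos by simp
    then show "T j i = (\<Sum>p\<in>?P. ?c p * ?g p j i)"
      by (simp add: sum_divide_distrib case_prod_beta)
  qed
  also have "\<dots> \<in> cspan {hatT K K a b | a b. length a = k \<and> length b = l \<and> set a \<subseteq> verts K \<and> set b \<subseteq> verts K}"
    using finite_idx by (intro cspan_sum) (auto simp: idx_def KV mem_Times_iff)
  finally show "T \<in> \<dots>" .
qed

theorem proposition4p17:
  fixes F :: "graph \<Rightarrow> bool" and G K :: graph and n :: nat
  assumes F_wf: "\<And>H. F H \<Longrightarrow> wf_graph H"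
    and F_iso: "\<And>H H'. F H \<Longrightarrow> wf_graph H' \<Longrightarrow> graph_iso H H' \<Longrightarrow> F H'"
    and F_N0: "F N0" and F_N1: "F N1"
    and F_union: "\<And>K' H f X i j. F K' \<Longrightarrow> F H \<Longrightarrow> vertex_overlap K' H f \<Longrightarrow>
                    wf_graph X \<Longrightarrow> is_f_union K' H f X i j \<Longrightarrow> F X"
    and G_wf: "wf_graph G" and G_verts: "verts G = {1..n}"
    and K_wf: "wf_graph K" and K_sub: "subgraph K G" and K_F: "F K"
    and K_greatest: "\<And>H. wf_graph H \<Longrightarrow> subgraph H G \<Longrightarrow> F H \<Longrightarrow> subgraph H K"
  shows "\<forall>k l. CG F G k l = perm_intertwiners n (aut_group n K) k l"
proof (intro allI)
  fix k l
  let ?A = "aut_group n K" and ?gens = "{hatT G H a b | H a b. (H, a, b) \<in> skewcat F k l}"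
  have "verts K = verts G"
    using F_iso K_greatest F_N1 K_sub by (rule verts_greatest_subgraph)
  then have KV: "verts K = {1..n}" using G_verts by simp
  have hatT_G: "hatT G H a b = hatT K H a b" if "F H" for H a b
    using F_iso K_greatest K_sub \<open>verts K = verts G\<close> that F_wf[OF that] by (rule hatT_greatest_subgraph)
  have "?gens \<subseteq> perm_invariants n ?A k l"
    using hatT_in_perm_invariants KV F_wf hatT_G unfolding skewcat_def by auto
  then have "CG F G k l \<subseteq> perm_invariants n ?A k l"
    unfolding CG_def by (rule cspan_subset_perm_invariants)
  moreover have "perm_invariants n ?A k l \<subseteq> CG F G k l"
  proof -
    have "{hatT K K a b | a b. length a = k \<and> length b = l \<and> set a \<subseteq> verts K \<and> set b \<subseteq> verts K}
        \<subseteq> ?gens"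
      using K_F unfolding skewcat_def hatT_G[OF K_F, symmetric] by blast
    then show ?thesis
      using perm_invariants_subset_cspan_hatT_self[OF K_wf KV] cspan_mono unfolding CG_def by blast
  qed
  ultimately show "CG F G k l = perm_intertwiners n ?A k l"
    using perm_intertwiners_eq_perm_invariants[of ?A n k l] aut_group_permutes by blast
qed

end
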